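(* Let $\Omega = [a,b)$ be a bounded interval with periodic boundary conditions, let $k \ge 0$ be an integer, let $T_k$ be the space of real-valued trigonometric polynomials on $\Omega$ of degree at most $k$, and let $P$ denote the $L^2(\Omega)$-orthogonal projection onto $T_k$. Let $u \colon I \to T_k$ (with $I$ an open time interval) be a continuously differentiable solution of the Fourier Galerkin semidiscretization of the Benjamin-Bona-Mahony equation \[ \partial_t u = -(\operatorname{I} - \partial_x^2)^{-1} \partial_x P \frac{u^2}{2}. \] Then the mass, momentum, and energy \[ \mathcal{M} = \int_\Omega u \,\mathrm{d}x, \qquad \mathcal{P} = \int_\Omega \Bigl( \tfrac{1}{2} u^2 + \tfrac{1}{2} (u_x)^2 \Bigr) \mathrm{d}x, \qquad \mathcal{E} = \int_\Omega \tfrac{1}{6} u^3 \,\mathrm{d}x \] are constant in time along $u$.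
   Context: $(\operatorname{I} - \partial_x^2)^{-1}$ denotes the inverse of $\operatorname{I} - \partial_x^2$ acting on periodic functions on $\Omega$; it maps $T_k$ to itself. The semidiscretization is an ODE on the finite-dimensional space $T_k$. *)

theory Defs
  imports "HOL-Analysis.Analysis"
begin

text \<open>Real trigonometric polynomials of degree at most k on the periodic interval [a,b),
  viewed as (b-a)-periodic functions on the whole real line.\<close>
definition trig_poly :: "real \<Rightarrow> real \<Rightarrow> nat \<Rightarrow> (real \<Rightarrow> real) \<Rightarrow> bool" where
  "trig_poly a b k f \<longleftrightarrow>
     (\<exists>c s :: nat \<Rightarrow> real. \<forall>x. f x = c 0 +
        (\<Sum>j=1..k. c j * cos (2 * pi * real j * (x - a) / (b - a))
                  + s j * sin (2 * pi * real j * (x - a) / (b - a))))"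

definition l2_proj :: "real \<Rightarrow> real \<Rightarrow> nat \<Rightarrow> (real \<Rightarrow> real) \<Rightarrow> (real \<Rightarrow> real)" where
  "l2_proj a b k f = (THE p. trig_poly a b k p \<and>
      (\<forall>q. trig_poly a b k q \<longrightarrow> integral {a..b} (\<lambda>x. (f x - p x) * q x) = 0))"

definition helm_inv :: "real \<Rightarrow> real \<Rightarrow> nat \<Rightarrow> (real \<Rightarrow> real) \<Rightarrow> (real \<Rightarrow> real)" where
  "helm_inv a b k g = (THE v. trig_poly a b k v \<and> (\<forall>x. v x - deriv (deriv v) x = g x))"

definition bbm_rhs :: "real \<Rightarrow> real \<Rightarrow> nat \<Rightarrow> (real \<Rightarrow> real) \<Rightarrow> (real \<Rightarrow> real)" where
  "bbm_rhs a b k v = (\<lambda>x. - helm_inv a b k (deriv (l2_proj a b k (\<lambda>y. (v y)^2 / 2))) x)"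

definition bbm_mass :: "real \<Rightarrow> real \<Rightarrow> (real \<Rightarrow> real) \<Rightarrow> real" where
  "bbm_mass a b v = integral {a..b} v"

definition bbm_momentum :: "real \<Rightarrow> real \<Rightarrow> (real \<Rightarrow> real) \<Rightarrow> real" where
  "bbm_momentum a b v = integral {a..b} (\<lambda>x. (v x)^2 / 2 + (deriv v x)^2 / 2)"

definition bbm_energy :: "real \<Rightarrow> real \<Rightarrow> (real \<Rightarrow> real) \<Rightarrow> real" where
  "bbm_energy a b v = integral {a..b} (\<lambda>x. (v x)^3 / 6)"

end

(* The three invariants are conserved because the right-hand side R = -(I - d^2)^-1 d P(u^2/2) is
   orthogonal to their variational derivatives 1, (I - d^2) u and u^2/2. With W = P(u^2/2) and
   Z = (I - d^2)^-1 W one has R = -Z', so the integrals of R, of u (R - R'') = -u W' and of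
   u^2/2 R = W R = -(Z - Z'') Z' reduce, by integration by parts and the projection property of W,
   to integrals of derivatives of periodic functions. Differentiation under the integral sign is
   justified since the Fourier coefficients of u(t) are finite combinations of its values at 2k+1
   equispaced nodes, and so inherit the regularity in t of the pointwise equation. *)

theory Submission
  imports Defs
begin

lemma integral_eq_0_if_periodic_antiderivative:
  fixes a b :: real
  assumes "a \<le> b"
    and "\<And>x. x \<in> {a..b} \<Longrightarrow> (F has_real_derivative f x) (at x within {a..b})"
    and "F b = F a"
  shows "integral {a..b} f = 0"
proof -
  have "(f has_integral F b - F a) {a..b}"
    using assms(1,2)
    by (intro fundamental_theorem_of_calculus) (auto simp: has_real_derivative_iff_has_vector_derivative)
  then show ?thesis
    using assms(3) by (simp add: integral_unique)
qed

lemma has_real_derivative_integral_param: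
  fixes f f' :: "real \<Rightarrow> real \<Rightarrow> real"
  assumes "convex I" "t \<in> I"
    and "\<And>t x. t \<in> I \<Longrightarrow> x \<in> {a..b} \<Longrightarrow> ((\<lambda>s. f s x) has_real_derivative f' t x) (at t within I)"
    and "\<And>t. t \<in> I \<Longrightarrow> continuous_on {a..b} (f t)"
    and "continuous_on (I \<times> {a..b}) (\<lambda>p. f' (fst p) (snd p))"
  shows "((\<lambda>t. integral {a..b} (f t)) has_real_derivative integral {a..b} (f' t)) (at t within I)"
  using leibniz_rule_field_derivative[of I a b f f' t] assms
  by (simp add: cbox_interval integrable_continuous_interval case_prod_beta')

lemma sum_cis_roots_of_unity:
  fixes n :: int and N :: nat
  assumes "\<not> int N dvd n"
  shows "(\<Sum>m<N. cis (real m * (2 * pi * of_int n / real N))) = 0"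
proof (cases "N = 0")
  case False
  define z where "z = cis (2 * pi * of_int n / real N)"
  have "z ^ N = cis (2 * pi * of_int n)"
    unfolding z_def Complex.DeMoivre using False by simp
  then have zN: "z ^ N = 1"
    by simp
  have "z \<noteq> 1"
  proof
    assume "z = 1"
    then have "cos (2 * pi * of_int n / real N) = 1"
      unfolding z_def by (metis cis.sel(1) one_complex.sel(1))
    then obtain i :: int where "2 * pi * of_int n / real N = of_int i * 2 * pi"
      using cos_one_2pi_int by blast
    then have "(of_int n :: real) = of_int (i * int N)"
      using False by (simp add: field_simps)
    then have "n = i * int N" by (simp only: of_int_eq_iff)
    with assms show False by simp
  qed
  have "(\<Sum>m<N. z ^ m) = 0"
    using \<open>z \<noteq> 1\<close> zN by (simp add: geometric_sum)
  then show ?thesis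
    by (simp add: z_def Complex.DeMoivre)
qed simp

section \<open>Trigonometric polynomials\<close>

locale trig_polys =
  fixes a b :: real and k :: nat
  assumes a_less_b: "a < b"
begin

abbreviation Tk :: "(real \<Rightarrow> real) \<Rightarrow> bool" where
  "Tk f \<equiv> trig_poly a b k f"

definition freq :: "int \<Rightarrow> real" where
  "freq n = 2 * pi * of_int n / (b - a)"

definition cosb :: "nat \<Rightarrow> real \<Rightarrow> real" where
  "cosb j x = cos (freq (int j) * (x - a))"

definition sinb :: "nat \<Rightarrow> real \<Rightarrow> real" where
  "sinb j x = sin (freq (int j) * (x - a))"

definition trig_sum :: "(nat \<Rightarrow> real) \<Rightarrow> (nat \<Rightarrow> real) \<Rightarrow> real \<Rightarrow> real" where
  "trig_sum c s x = (\<Sum>j\<le>k. c j * cosb j x + s j * sinb j x)"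

lemma freq_times_length: "freq n * (b - a) = 2 * pi * of_int n"
  using a_less_b by (simp add: freq_def)

lemma cosb_0 [simp]: "cosb 0 x = 1" and sinb_0 [simp]: "sinb 0 x = 0"
  by (simp_all add: cosb_def sinb_def freq_def)

lemma trig_sum_eq:
  "trig_sum c s x = c 0 + (\<Sum>j=1..k. c j * cos (2 * pi * real j * (x - a) / (b - a))
                                    + s j * sin (2 * pi * real j * (x - a) / (b - a)))"
proof -
  have "trig_sum c s x = c 0 + (\<Sum>j=Suc 0..k. c j * cosb j x + s j * sinb j x)"
    unfolding trig_sum_def atMost_atLeast0 by (simp add: sum.atLeast_Suc_atMost)
  then show ?thesis
    by (simp add: cosb_def sinb_def freq_def)
qed

lemma trig_poly_iff_trig_sum: "Tk f \<longleftrightarrow> (\<exists>c s. f = trig_sum c s)"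
  unfolding trig_poly_def trig_sum_eq fun_eq_iff ..

lemma Tk_trig_sum [simp]: "Tk (trig_sum c s)"
  unfolding trig_poly_iff_trig_sum by blast

lemma has_real_derivative_cosb: "(cosb j has_real_derivative - freq (int j) * sinb j x) (at x)"
  unfolding cosb_def[abs_def] sinb_def by (auto intro!: derivative_eq_intros)

lemma has_real_derivative_sinb: "(sinb j has_real_derivative freq (int j) * cosb j x) (at x)"
  unfolding cosb_def sinb_def[abs_def] by (auto intro!: derivative_eq_intros)

lemma has_real_derivative_trig_sum:
  "(trig_sum c s has_real_derivative trig_sum (\<lambda>j. freq j * s j) (\<lambda>j. - freq j * c j) x) (at x)"
proof -
  have "((\<lambda>x. \<Sum>j\<le>k. c j * cosb j x + s j * sinb j x) has_real_derivative
        (\<Sum>j\<le>k. c j * (- freq j * sinb j x) + s j * (freq j * cosb j x))) (at x)"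
    by (intro DERIV_sum DERIV_add DERIV_cmult has_real_derivative_cosb has_real_derivative_sinb)
  then show ?thesis
    unfolding trig_sum_def[abs_def] by (simp add: algebra_simps)
qed

lemma deriv_trig_sum: "deriv (trig_sum c s) = trig_sum (\<lambda>j. freq j * s j) (\<lambda>j. - freq j * c j)"
  using has_real_derivative_trig_sum DERIV_imp_deriv by blast

lemma continuous_on_trig_sum [continuous_intros]: "continuous_on S (trig_sum c s)"
  unfolding trig_sum_def[abs_def] cosb_def sinb_def by (intro continuous_intros)

lemma trig_sum_diff: "trig_sum c s x - trig_sum c' s' x = trig_sum (\<lambda>j. c j - c' j) (\<lambda>j. s j - s' j) x"
  unfolding trig_sum_def by (simp add: sum_subtractf[symmetric] algebra_simps)

lemma trig_sum_minus: "- trig_sum c s x = trig_sum (\<lambda>j. - c j) (\<lambda>j. - s j) x"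
  unfolding trig_sum_def by (simp add: sum_negf[symmetric] algebra_simps)

lemma trig_sum_periodic: "trig_sum c s b = trig_sum c s a"
proof -
  have "cosb j b = cosb j a" "sinb j b = sinb j a" for j
    unfolding cosb_def sinb_def freq_times_length
    using cos_int_2pin[of "int j"] sin_int_2pin[of "int j"] by simp_all
  then show ?thesis
    unfolding trig_sum_def by simp
qed

lemma Tk_periodic: "Tk f \<Longrightarrow> f b = f a"
  unfolding trig_poly_iff_trig_sum using trig_sum_periodic by auto

lemma Tk_deriv: "Tk f \<Longrightarrow> Tk (deriv f)"
  unfolding trig_poly_iff_trig_sum using deriv_trig_sum by auto

lemma has_real_derivative_Tk: "Tk f \<Longrightarrow> (f has_real_derivative deriv f x) (at x)"
  unfolding trig_poly_iff_trig_sum using has_real_derivative_trig_sum deriv_trig_sum by auto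

lemma continuous_on_Tk: "Tk f \<Longrightarrow> continuous_on S f"
  unfolding trig_poly_iff_trig_sum using continuous_on_trig_sum by auto

lemma Tk_minus: "Tk f \<Longrightarrow> Tk (\<lambda>x. - f x)"
  unfolding trig_poly_iff_trig_sum using trig_sum_minus by fastforce

lemma freq_add: "freq (m + n) = freq m + freq n"
  and freq_diff: "freq (m - n) = freq m - freq n"
  by (simp_all add: freq_def add_divide_distrib diff_divide_distrib algebra_simps)

lemma cosb_mult_cosb:
  "cosb j x * cosb l x = (cos (freq (int j - int l) * (x - a)) + cos (freq (int j + int l) * (x - a))) / 2"
  unfolding cosb_def cos_times_cos freq_add freq_diff by (simp add: algebra_simps)

lemma sinb_mult_sinb:
  "sinb j x * sinb l x = (cos (freq (int j - int l) * (x - a)) - cos (freq (int j + int l) * (x - a))) / 2"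
  unfolding sinb_def sin_times_sin freq_add freq_diff by (simp add: algebra_simps)

lemma sinb_mult_cosb:
  "sinb j x * cosb l x = (sin (freq (int j + int l) * (x - a)) + sin (freq (int j - int l) * (x - a))) / 2"
  unfolding sinb_def cosb_def sin_times_cos freq_add freq_diff by (simp add: algebra_simps)

lemma continuous_on_cosb [continuous_intros]: "continuous_on S (cosb j)"
  and continuous_on_sinb [continuous_intros]: "continuous_on S (sinb j)"
  unfolding cosb_def[abs_def] sinb_def[abs_def] by (intro continuous_intros)+

lemma Tk_cosb: "l \<le> k \<Longrightarrow> Tk (cosb l)"
  and Tk_sinb: "l \<le> k \<Longrightarrow> Tk (sinb l)"
proof -
  assume "l \<le> k"
  then have "cosb l = trig_sum (\<lambda>j. if j = l then 1 else 0) (\<lambda>_. 0)"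
    and "sinb l = trig_sum (\<lambda>_. 0) (\<lambda>j. if j = l then 1 else 0)"
    by (simp_all add: trig_sum_def fun_eq_iff if_distrib[of "\<lambda>c. c * _"] cong: if_cong)
  then show "Tk (cosb l)" "Tk (sinb l)"
    by (metis Tk_trig_sum)+
qed

lemma trig_sum_cong:
  assumes "\<And>j. j \<le> k \<Longrightarrow> c j = c' j" and "\<And>j. j \<le> k \<Longrightarrow> j \<noteq> 0 \<Longrightarrow> s j = s' j"
  shows "trig_sum c s = trig_sum c' s'"
  unfolding trig_sum_def fun_eq_iff
proof (intro allI sum.cong refl)
  fix x j
  assume "j \<in> {..k}"
  then show "c j * cosb j x + s j * sinb j x = c' j * cosb j x + s' j * sinb j x"
    using assms by (cases "j = 0") auto
qed

end

section \<open>Means that are exact on trigonometric polynomials\<close>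

text \<open>Exactness up to degree \<open>2 k\<close>, i.e. on products of two basis functions, is all that
  orthogonality needs; the integral mean and the mean over \<open>2 k + 1\<close> equispaced nodes both
  qualify.\<close>

locale trig_mean = trig_polys +
  fixes M :: "(real \<Rightarrow> real) \<Rightarrow> real"
  assumes mean_add: "continuous_on {a..b} f \<Longrightarrow> continuous_on {a..b} g \<Longrightarrow>
      M (\<lambda>x. f x + g x) = M f + M g"
    and mean_scale: "continuous_on {a..b} f \<Longrightarrow> M (\<lambda>x. c * f x) = c * M f"
    and mean_cos: "\<bar>n\<bar> \<le> int (2 * k) \<Longrightarrow> M (\<lambda>x. cos (freq n * (x - a))) = (if n = 0 then 1 else 0)"
    and mean_sin: "\<bar>n\<bar> \<le> int (2 * k) \<Longrightarrow> M (\<lambda>x. sin (freq n * (x - a))) = 0"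
begin

lemma mean_zero: "M (\<lambda>x. 0) = 0"
  using mean_scale[of "\<lambda>x. 0" 0] by simp

lemma mean_diff:
  assumes "continuous_on {a..b} f" "continuous_on {a..b} g"
  shows "M (\<lambda>x. f x - g x) = M f - M g"
  using mean_add[of f "\<lambda>x. -1 * g x"] mean_scale[of g "-1"] assms
  by (simp add: continuous_on_minus)

lemma mean_average:
  assumes "continuous_on {a..b} f" "continuous_on {a..b} g"
  shows "M (\<lambda>x. (f x + g x) / 2) = (M f + M g) / 2"
    and "M (\<lambda>x. (f x - g x) / 2) = (M f - M g) / 2"
  using mean_scale[of "\<lambda>x. f x + g x" "1/2"] mean_scale[of "\<lambda>x. f x - g x" "1/2"]
    mean_add mean_diff assms
  by (simp_all add: continuous_on_add continuous_on_diff)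

lemma mean_sum:
  assumes "finite A" "\<And>i. i \<in> A \<Longrightarrow> continuous_on {a..b} (f i)"
  shows "M (\<lambda>x. \<Sum>i\<in>A. f i x) = (\<Sum>i\<in>A. M (f i))"
  using assms
proof (induction A rule: finite_induct)
  case empty
  then show ?case by (simp add: mean_zero)
next
  case (insert i A)
  then have "M (\<lambda>x. f i x + (\<Sum>i\<in>A. f i x)) = M (f i) + M (\<lambda>x. \<Sum>i\<in>A. f i x)"
    by (intro mean_add) (auto intro!: continuous_on_sum)
  with insert show ?case by simp
qed

lemma mean_cosb_cosb:
  assumes "j \<le> k" "l \<le> k"
  shows "M (\<lambda>x. cosb j x * cosb l x) = (if j = l then if j = 0 then 1 else 1 / 2 else 0)"
  unfolding cosb_mult_cosb using assms
  by (subst mean_average) (auto intro!: continuous_intros simp: mean_cos)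

lemma mean_sinb_sinb:
  assumes "j \<le> k" "l \<le> k"
  shows "M (\<lambda>x. sinb j x * sinb l x) = (if j = l \<and> j \<noteq> 0 then 1 / 2 else 0)"
  unfolding sinb_mult_sinb using assms
  by (subst mean_average) (auto intro!: continuous_intros simp: mean_cos)

lemma mean_sinb_cosb:
  assumes "j \<le> k" "l \<le> k"
  shows "M (\<lambda>x. sinb j x * cosb l x) = 0"
  unfolding sinb_mult_cosb using assms
  by (subst mean_average) (auto intro!: continuous_intros simp: mean_sin)

lemma mean_cosb_sinb:
  assumes "j \<le> k" "l \<le> k"
  shows "M (\<lambda>x. cosb j x * sinb l x) = 0"
  using mean_sinb_cosb[OF assms(2,1)] by (simp add: mult.commute)

lemma mean_mult_trig_sum:
  assumes "continuous_on {a..b} h"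
  shows "M (\<lambda>x. h x * trig_sum c s x) =
           (\<Sum>j\<le>k. c j * M (\<lambda>x. h x * cosb j x) + s j * M (\<lambda>x. h x * sinb j x))"
proof -
  have "M (\<lambda>x. h x * trig_sum c s x) = M (\<lambda>x. \<Sum>j\<le>k. c j * (h x * cosb j x) + s j * (h x * sinb j x))"
    unfolding trig_sum_def by (simp add: sum_distrib_left algebra_simps)
  also have "\<dots> = (\<Sum>j\<le>k. M (\<lambda>x. c j * (h x * cosb j x) + s j * (h x * sinb j x)))"
    using assms by (intro mean_sum) (auto intro!: continuous_intros)
  also have "\<dots> = (\<Sum>j\<le>k. c j * M (\<lambda>x. h x * cosb j x) + s j * M (\<lambda>x. h x * sinb j x))"
    using assms by (intro sum.cong refl) (simp add: mean_add mean_scale continuous_intros)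
  finally show ?thesis .
qed

definition cos_coeff :: "(real \<Rightarrow> real) \<Rightarrow> nat \<Rightarrow> real" where
  "cos_coeff f l = (if l = 0 then 1 else 2) * M (\<lambda>x. f x * cosb l x)"

definition sin_coeff :: "(real \<Rightarrow> real) \<Rightarrow> nat \<Rightarrow> real" where
  "sin_coeff f l = 2 * M (\<lambda>x. f x * sinb l x)"

lemma cos_coeff_trig_sum:
  assumes "l \<le> k"
  shows "cos_coeff (trig_sum c s) l = c l"
proof -
  have "M (\<lambda>x. trig_sum c s x * cosb l x) = M (\<lambda>x. cosb l x * trig_sum c s x)"
    by (simp add: mult.commute)
  also have "\<dots> = (\<Sum>j\<le>k. c j * M (\<lambda>x. cosb l x * cosb j x) + s j * M (\<lambda>x. cosb l x * sinb j x))"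
    by (intro mean_mult_trig_sum continuous_intros)
  also have "\<dots> = (\<Sum>j\<le>k. if j = l then c l * (if l = 0 then 1 else 1 / 2) else 0)"
    using assms by (intro sum.cong refl) (simp add: mean_cosb_cosb mean_cosb_sinb del: cosb_0 sinb_0)
  finally show ?thesis
    using assms by (simp add: cos_coeff_def)
qed

lemma sin_coeff_trig_sum:
  assumes "l \<le> k" "l \<noteq> 0"
  shows "sin_coeff (trig_sum c s) l = s l"
proof -
  have "M (\<lambda>x. trig_sum c s x * sinb l x) = M (\<lambda>x. sinb l x * trig_sum c s x)"
    by (simp add: mult.commute)
  also have "\<dots> = (\<Sum>j\<le>k. c j * M (\<lambda>x. sinb l x * cosb j x) + s j * M (\<lambda>x. sinb l x * sinb j x))"
    by (intro mean_mult_trig_sum continuous_intros)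
  also have "\<dots> = (\<Sum>j\<le>k. if j = l then s l / 2 else 0)"
    using assms by (intro sum.cong refl) (simp add: mean_sinb_sinb mean_sinb_cosb del: cosb_0 sinb_0)
  finally show ?thesis
    using assms by (simp add: sin_coeff_def)
qed

lemma trig_sum_coeffs: "Tk f \<Longrightarrow> f = trig_sum (cos_coeff f) (sin_coeff f)"
  unfolding trig_poly_iff_trig_sum
  by (auto intro!: trig_sum_cong simp: cos_coeff_trig_sum sin_coeff_trig_sum)


lemma sin_coeff_0 [simp]: "sin_coeff f 0 = 0"
  by (simp add: sin_coeff_def mean_zero)

lemma mean_orthogonal_iff:
  assumes f: "continuous_on {a..b} f" and p: "Tk p"
  shows "(\<forall>q. Tk q \<longrightarrow> M (\<lambda>x. (f x - p x) * q x) = 0) \<longleftrightarrow>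
           p = trig_sum (cos_coeff f) (sin_coeff f)"
proof -
  have "continuous_on {a..b} p"
    using p by (rule continuous_on_Tk)
  then have residual: "M (\<lambda>x. (f x - p x) * h x) = M (\<lambda>x. f x * h x) - M (\<lambda>x. p x * h x)"
    if "continuous_on {a..b} h" for h
    unfolding left_diff_distrib using that f by (intro mean_diff continuous_intros)
  have "(\<forall>q. Tk q \<longrightarrow> M (\<lambda>x. (f x - p x) * q x) = 0) \<longleftrightarrow>
        (\<forall>l\<le>k. cos_coeff p l = cos_coeff f l \<and> sin_coeff p l = sin_coeff f l)"
  proof
    assume orth: "\<forall>q. Tk q \<longrightarrow> M (\<lambda>x. (f x - p x) * q x) = 0"
    show "\<forall>l\<le>k. cos_coeff p l = cos_coeff f l \<and> sin_coeff p l = sin_coeff f l"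
    proof (intro allI impI conjI)
      fix l assume "l \<le> k"
      then have "M (\<lambda>x. (f x - p x) * cosb l x) = 0" "M (\<lambda>x. (f x - p x) * sinb l x) = 0"
        using orth Tk_cosb Tk_sinb by blast+
      then show "cos_coeff p l = cos_coeff f l" "sin_coeff p l = sin_coeff f l"
        by (simp_all add: residual continuous_intros cos_coeff_def sin_coeff_def)
    qed
  next
    assume coeffs: "\<forall>l\<le>k. cos_coeff p l = cos_coeff f l \<and> sin_coeff p l = sin_coeff f l"
    have "M (\<lambda>x. (f x - p x) * cosb j x) = 0" "M (\<lambda>x. (f x - p x) * sinb j x) = 0" if "j \<le> k" for j
      using coeffs that
      by (auto simp: residual continuous_intros cos_coeff_def sin_coeff_def split: if_splits)
    then have "M (\<lambda>x. (f x - p x) * trig_sum c s x) = 0" for c s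
      by (simp add: mean_mult_trig_sum continuous_intros f \<open>continuous_on {a..b} p\<close>)
    then show "\<forall>q. Tk q \<longrightarrow> M (\<lambda>x. (f x - p x) * q x) = 0"
      unfolding trig_poly_iff_trig_sum by blast
  qed
  also have "\<dots> \<longleftrightarrow> p = trig_sum (cos_coeff f) (sin_coeff f)"
  proof
    assume "\<forall>l\<le>k. cos_coeff p l = cos_coeff f l \<and> sin_coeff p l = sin_coeff f l"
    then show "p = trig_sum (cos_coeff f) (sin_coeff f)"
      using trig_sum_coeffs[OF p] trig_sum_cong by metis
  next
    assume "p = trig_sum (cos_coeff f) (sin_coeff f)"
    then show "\<forall>l\<le>k. cos_coeff p l = cos_coeff f l \<and> sin_coeff p l = sin_coeff f l"
      by (metis cos_coeff_trig_sum sin_coeff_trig_sum sin_coeff_0)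
  qed
  finally show ?thesis .
qed

end

context trig_polys begin

lemma integral_cos_freq: "integral {a..b} (\<lambda>x. cos (freq n * (x - a))) = (if n = 0 then b - a else 0)"
proof (cases "n = 0")
  case False
  then have "freq n \<noteq> 0"
    using a_less_b by (simp add: freq_def)
  have "integral {a..b} (\<lambda>x. cos (freq n * (x - a))) = 0"
    by (rule integral_eq_0_if_periodic_antiderivative[where F = "\<lambda>x. sin (freq n * (x - a)) / freq n"])
      (use a_less_b \<open>freq n \<noteq> 0\<close> in \<open>auto intro!: derivative_eq_intros simp: freq_times_length\<close>)
  with False show ?thesis by simp
qed (use a_less_b in \<open>simp add: freq_def\<close>)

lemma integral_sin_freq: "integral {a..b} (\<lambda>x. sin (freq n * (x - a))) = 0"
proof (cases "n = 0")
  case False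
  then have "freq n \<noteq> 0"
    using a_less_b by (simp add: freq_def)
  show ?thesis
    by (rule integral_eq_0_if_periodic_antiderivative[where F = "\<lambda>x. - cos (freq n * (x - a)) / freq n"])
      (use a_less_b \<open>freq n \<noteq> 0\<close> in \<open>auto intro!: derivative_eq_intros simp: freq_times_length\<close>)
qed (simp add: freq_def)

sublocale integral_mean: trig_mean a b k "\<lambda>f. integral {a..b} f / (b - a)"
  using a_less_b
  by unfold_locales
    (simp_all add: integral_add integrable_continuous_interval add_divide_distrib
      integral_cos_freq integral_sin_freq)

text \<open>The discrete mean expresses Fourier coefficients through finitely many point values; this
  transfers the pointwise time regularity of a solution to its coefficients.\<close>

definition sample_node :: "nat \<Rightarrow> real" where
  "sample_node m = a + real m * (b - a) / real (2 * k + 1)"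

definition sample_mean :: "(real \<Rightarrow> real) \<Rightarrow> real" where
  "sample_mean f = (\<Sum>m<2 * k + 1. f (sample_node m)) / real (2 * k + 1)"

lemma freq_sample_node:
  "freq n * (sample_node m - a) = real m * (2 * pi * of_int n / real (2 * k + 1))"
proof -
  have "b - a \<noteq> 0"
    using a_less_b by simp
  then show ?thesis
    by (simp add: freq_def sample_node_def)
qed

lemma sample_mean_cos_sin:
  assumes "\<bar>n\<bar> \<le> int (2 * k)" "n \<noteq> 0"
  shows "sample_mean (\<lambda>x. cos (freq n * (x - a))) = 0"
    and "sample_mean (\<lambda>x. sin (freq n * (x - a))) = 0"
proof -
  have "\<not> int (2 * k + 1) dvd n"
    using assms zdvd_imp_le[of "int (2 * k + 1)" "\<bar>n\<bar>"] by auto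
  from sum_cis_roots_of_unity[OF this]
  have "Re (\<Sum>m<2 * k + 1. cis (freq n * (sample_node m - a))) = 0"
       "Im (\<Sum>m<2 * k + 1. cis (freq n * (sample_node m - a))) = 0"
    unfolding freq_sample_node by simp_all
  then show "sample_mean (\<lambda>x. cos (freq n * (x - a))) = 0"
    and "sample_mean (\<lambda>x. sin (freq n * (x - a))) = 0"
    by (simp_all add: sample_mean_def Re_sum Im_sum)
qed

sublocale sample: trig_mean a b k sample_mean
proof unfold_locales
  show "sample_mean (\<lambda>x. f x + g x) = sample_mean f + sample_mean g" for f g
    unfolding sample_mean_def sum.distrib add_divide_distrib ..
  show "sample_mean (\<lambda>x. c * f x) = c * sample_mean f" for c f
    unfolding sample_mean_def sum_distrib_left[symmetric] by simp
  show "sample_mean (\<lambda>x. cos (freq n * (x - a))) = (if n = 0 then 1 else 0)"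
    and "sample_mean (\<lambda>x. sin (freq n * (x - a))) = 0"
    if "\<bar>n\<bar> \<le> int (2 * k)" for n
    using that sample_mean_cos_sin[of n] by (cases "n = 0"; simp add: sample_mean_def freq_def)+
qed

end

section \<open>The projection, the inverse of \<open>I - d\<^sup>2\<close> and the right-hand side\<close>

context trig_polys begin

lemma l2_proj_eq:
  assumes "continuous_on {a..b} f"
  shows "l2_proj a b k f = trig_sum (integral_mean.cos_coeff f) (integral_mean.sin_coeff f)"
proof -
  have "(\<forall>q. Tk q \<longrightarrow> integral {a..b} (\<lambda>x. (f x - p x) * q x) = 0) \<longleftrightarrow>
          p = trig_sum (integral_mean.cos_coeff f) (integral_mean.sin_coeff f)" if "Tk p" for p
    using integral_mean.mean_orthogonal_iff[OF assms that] a_less_b by simp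
  then show ?thesis
    unfolding l2_proj_def by (intro the_equality) auto
qed

lemma Tk_l2_proj: "continuous_on {a..b} f \<Longrightarrow> Tk (l2_proj a b k f)"
  by (simp add: l2_proj_eq)

lemma l2_proj_orthogonal:
  assumes "continuous_on {a..b} f" "Tk q"
  shows "integral {a..b} (\<lambda>x. (f x - l2_proj a b k f x) * q x) = 0"
  using integral_mean.mean_orthogonal_iff[OF assms(1) Tk_l2_proj[OF assms(1)]] assms a_less_b
  by (simp add: l2_proj_eq)

lemma trig_sum_minus_deriv2:
  "trig_sum c s x - deriv (deriv (trig_sum c s)) x =
     trig_sum (\<lambda>j. (1 + (freq j)\<^sup>2) * c j) (\<lambda>j. (1 + (freq j)\<^sup>2) * s j) x"
  unfolding deriv_trig_sum trig_sum_diff by (simp add: algebra_simps power2_eq_square)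

lemma helm_inv_ex1:
  assumes "Tk g"
  shows "\<exists>!v. Tk v \<and> (\<forall>x. v x - deriv (deriv v) x = g x)"
proof -
  define c where "c j = integral_mean.cos_coeff g j / (1 + (freq j)\<^sup>2)" for j
  define s where "s j = integral_mean.sin_coeff g j / (1 + (freq j)\<^sup>2)" for j
  have pos: "1 + (freq j)\<^sup>2 \<noteq> 0" for j
    using zero_le_power2[of "freq j"] by linarith
  have "Tk v \<and> (\<forall>x. v x - deriv (deriv v) x = g x) \<longleftrightarrow> v = trig_sum c s" for v
  proof
    assume v: "Tk v \<and> (\<forall>x. v x - deriv (deriv v) x = g x)"
    then obtain c' s' where v_eq: "v = trig_sum c' s'"
      unfolding trig_poly_iff_trig_sum by blast
    with v have "g = trig_sum (\<lambda>j. (1 + (freq j)\<^sup>2) * c' j) (\<lambda>j. (1 + (freq j)\<^sup>2) * s' j)"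
      by (auto simp: fun_eq_iff trig_sum_minus_deriv2)
    then have "c' j = c j" "j \<noteq> 0 \<Longrightarrow> s' j = s j" if "j \<le> k" for j
      using that pos[of j]
      by (simp_all add: c_def s_def integral_mean.cos_coeff_trig_sum integral_mean.sin_coeff_trig_sum)
    then show "v = trig_sum c s"
      unfolding v_eq by (intro trig_sum_cong)
  next
    assume "v = trig_sum c s"
    moreover have "g = trig_sum (\<lambda>j. (1 + (freq j)\<^sup>2) * c j) (\<lambda>j. (1 + (freq j)\<^sup>2) * s j)"
      using integral_mean.trig_sum_coeffs[OF assms] pos by (simp add: c_def s_def)
    ultimately show "Tk v \<and> (\<forall>x. v x - deriv (deriv v) x = g x)"
      by (simp add: trig_sum_minus_deriv2)
  qed
  then show ?thesis
    by (intro ex1I[of _ "trig_sum c s"]) auto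
qed

lemma helm_inv_eqI:
  assumes "Tk g" "Tk v" "\<And>x. v x - deriv (deriv v) x = g x"
  shows "helm_inv a b k g = v"
  unfolding helm_inv_def using helm_inv_ex1[OF assms(1)] assms(2,3) by (intro the1_equality) auto

lemma Tk_helm_inv: "Tk g \<Longrightarrow> Tk (helm_inv a b k g)"
  and helm_inv_minus_deriv2: "Tk g \<Longrightarrow> helm_inv a b k g x - deriv (deriv (helm_inv a b k g)) x = g x"
  using theI'[OF helm_inv_ex1] unfolding helm_inv_def by blast+

lemma helm_inv_deriv:
  assumes "Tk g"
  shows "helm_inv a b k (deriv g) = deriv (helm_inv a b k g)"
proof (rule helm_inv_eqI)
  define v where "v = helm_inv a b k g"
  have "Tk v" "Tk (deriv (deriv v))"
    unfolding v_def by (simp_all add: assms Tk_deriv Tk_helm_inv)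
  have "g = (\<lambda>x. v x - deriv (deriv v) x)"
    unfolding v_def using helm_inv_minus_deriv2[OF assms] by simp
  then show "deriv v x - deriv (deriv (deriv v)) x = deriv g x" for x
    using \<open>Tk v\<close> \<open>Tk (deriv (deriv v))\<close>
    by (auto intro!: DERIV_imp_deriv[symmetric] DERIV_diff has_real_derivative_Tk)
  show "Tk (deriv g)" "Tk (deriv v)"
    using assms \<open>Tk v\<close> by (simp_all add: Tk_deriv)
qed

lemma integral_periodic_deriv:
  assumes "\<And>x. (F has_real_derivative f x) (at x)" "F b = F a"
  shows "integral {a..b} f = 0"
  using a_less_b assms
  by (intro integral_eq_0_if_periodic_antiderivative[of a b F]) (auto intro: has_field_derivative_at_within)

lemma integral_deriv_Tk: "Tk f \<Longrightarrow> integral {a..b} (deriv f) = 0"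
  by (intro integral_periodic_deriv[of f]) (simp_all add: has_real_derivative_Tk Tk_periodic)

lemma integral_mult_deriv_Tk_self: "Tk f \<Longrightarrow> integral {a..b} (\<lambda>x. f x * deriv f x) = 0"
  by (intro integral_periodic_deriv[of "\<lambda>x. (f x)\<^sup>2 / 2"])
    (auto intro!: derivative_eq_intros has_real_derivative_Tk simp: Tk_periodic)

lemma integral_deriv_mult_Tk:
  assumes "Tk f" "Tk g"
  shows "integral {a..b} (\<lambda>x. deriv f x * g x) = - integral {a..b} (\<lambda>x. f x * deriv g x)"
proof -
  have "integral {a..b} (\<lambda>x. deriv f x * g x + f x * deriv g x) = 0"
    using assms
    by (intro integral_periodic_deriv[of "\<lambda>x. f x * g x"])
      (auto intro!: derivative_eq_intros has_real_derivative_Tk simp: Tk_periodic)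
  moreover have "integral {a..b} (\<lambda>x. deriv f x * g x + f x * deriv g x) =
      integral {a..b} (\<lambda>x. deriv f x * g x) + integral {a..b} (\<lambda>x. f x * deriv g x)"
    using assms
    by (intro integral_add integrable_continuous_interval continuous_intros continuous_on_Tk Tk_deriv)
  ultimately show ?thesis
    by simp
qed

lemma deriv_uminus_Tk: "Tk f \<Longrightarrow> deriv (\<lambda>x. - f x) = (\<lambda>x. - deriv f x)"
  by (intro ext DERIV_imp_deriv DERIV_minus has_real_derivative_Tk)

lemma integrable_Tk_mult: "Tk f \<Longrightarrow> Tk g \<Longrightarrow> (\<lambda>x. f x * g x) integrable_on {a..b}"
  by (intro integrable_continuous_interval continuous_intros continuous_on_Tk)

definition bbm_flux :: "(real \<Rightarrow> real) \<Rightarrow> real \<Rightarrow> real" where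
  "bbm_flux U = l2_proj a b k (\<lambda>y. (U y)\<^sup>2 / 2)"

definition bbm_potential :: "(real \<Rightarrow> real) \<Rightarrow> real \<Rightarrow> real" where
  "bbm_potential U = helm_inv a b k (bbm_flux U)"

lemma continuous_on_half_square: "Tk U \<Longrightarrow> continuous_on {a..b} (\<lambda>y. (U y)\<^sup>2 / 2)"
  by (intro continuous_intros continuous_on_Tk) auto

lemma Tk_bbm_flux: "Tk U \<Longrightarrow> Tk (bbm_flux U)"
  unfolding bbm_flux_def by (intro Tk_l2_proj continuous_on_half_square)

lemma Tk_bbm_potential: "Tk U \<Longrightarrow> Tk (bbm_potential U)"
  unfolding bbm_potential_def by (intro Tk_helm_inv Tk_bbm_flux)

lemma bbm_flux_eq:
  "Tk U \<Longrightarrow> bbm_flux U = (\<lambda>x. bbm_potential U x - deriv (deriv (bbm_potential U)) x)"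
  unfolding bbm_potential_def by (simp add: helm_inv_minus_deriv2 Tk_bbm_flux)

lemma bbm_rhs_eq: "Tk U \<Longrightarrow> bbm_rhs a b k U = (\<lambda>x. - deriv (bbm_potential U) x)"
  unfolding bbm_rhs_def bbm_potential_def
  by (simp add: helm_inv_deriv Tk_bbm_flux flip: bbm_flux_def)

lemma integral_half_square_mult:
  assumes "Tk U" "Tk q"
  shows "integral {a..b} (\<lambda>x. (U x)\<^sup>2 / 2 * q x) = integral {a..b} (\<lambda>x. bbm_flux U x * q x)"
proof -
  have "0 = integral {a..b} (\<lambda>x. ((U x)\<^sup>2 / 2 - bbm_flux U x) * q x)"
    unfolding bbm_flux_def using assms by (intro l2_proj_orthogonal[symmetric] continuous_on_half_square)
  also have "\<dots> = integral {a..b} (\<lambda>x. (U x)\<^sup>2 / 2 * q x) - integral {a..b} (\<lambda>x. bbm_flux U x * q x)"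
    unfolding left_diff_distrib using assms Tk_bbm_flux[OF assms(1)]
    by (intro integral_diff integrable_continuous_interval continuous_intros continuous_on_Tk) auto
  finally show ?thesis
    by simp
qed

lemma Tk_bbm_rhs: "Tk U \<Longrightarrow> Tk (bbm_rhs a b k U)"
  by (simp add: bbm_rhs_eq Tk_minus Tk_deriv Tk_bbm_potential)

lemma integral_bbm_rhs: "Tk U \<Longrightarrow> integral {a..b} (bbm_rhs a b k U) = 0"
  by (simp add: bbm_rhs_eq integral_neg integral_deriv_Tk Tk_bbm_potential)

lemma integral_bbm_rhs_momentum:
  assumes U: "Tk U"
  defines "R \<equiv> bbm_rhs a b k U"
  shows "integral {a..b} (\<lambda>x. U x * R x + deriv U x * deriv R x) = 0"
proof -
  define W where "W = bbm_flux U"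
  define Z where "Z = bbm_potential U"
  have W: "Tk W" and Z: "Tk Z" "Tk (deriv Z)" "Tk (deriv (deriv Z))" "Tk (deriv (deriv (deriv Z)))"
    and U': "Tk (deriv U)"
    unfolding W_def Z_def using U by (simp_all add: Tk_deriv Tk_bbm_flux Tk_bbm_potential)
  have R_eq: "R = (\<lambda>x. - deriv Z x)" and dR: "deriv R = (\<lambda>x. - deriv (deriv Z) x)"
    unfolding R_def Z_def bbm_rhs_eq[OF U] using Z(2) by (simp_all add: Z_def deriv_uminus_Tk)
  have dW: "deriv W x = deriv Z x - deriv (deriv (deriv Z)) x" for x
    unfolding W_def bbm_flux_eq[OF U] Z_def[symmetric] using Z
    by (intro DERIV_imp_deriv DERIV_diff has_real_derivative_Tk)
  have split: "integral {a..b} (\<lambda>x. U x * R x + deriv U x * deriv R x)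
      = - integral {a..b} (\<lambda>x. U x * deriv Z x) - integral {a..b} (\<lambda>x. deriv U x * deriv (deriv Z) x)"
    unfolding dR unfolding R_eq using U U' Z
    by (simp add: integral_diff integral_neg integrable_neg integrable_Tk_mult)
  have by_parts: "integral {a..b} (\<lambda>x. deriv U x * deriv (deriv Z) x)
      = - integral {a..b} (\<lambda>x. U x * deriv (deriv (deriv Z)) x)"
    using U Z(3) by (rule integral_deriv_mult_Tk)
  have "(\<lambda>x. deriv W x * U x) = (\<lambda>x. U x * deriv Z x - U x * deriv (deriv (deriv Z)) x)"
    unfolding dW by (simp add: fun_eq_iff algebra_simps)
  then have flux: "integral {a..b} (\<lambda>x. deriv W x * U x)
      = integral {a..b} (\<lambda>x. U x * deriv Z x) - integral {a..b} (\<lambda>x. U x * deriv (deriv (deriv Z)) x)"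
    using U Z by (simp add: integral_diff integrable_Tk_mult)
  have cubic: "integral {a..b} (\<lambda>x. (U x)\<^sup>2 / 2 * deriv U x) = 0"
    using U by (intro integral_periodic_deriv[of "\<lambda>x. (U x) ^ 3 / 6"])
      (auto intro!: derivative_eq_intros has_real_derivative_Tk simp: Tk_periodic power2_eq_square)
  have "integral {a..b} (\<lambda>x. deriv W x * U x) = - integral {a..b} (\<lambda>x. W x * deriv U x)"
    using W U by (rule integral_deriv_mult_Tk)
  also have "\<dots> = - integral {a..b} (\<lambda>x. (U x)\<^sup>2 / 2 * deriv U x)"
    unfolding W_def using integral_half_square_mult[OF U U'] by simp
  finally show ?thesis
    using split by_parts flux cubic by simp
qed

lemma integral_bbm_rhs_energy:
  assumes U: "Tk U"
  shows "integral {a..b} (\<lambda>x. (U x)\<^sup>2 / 2 * bbm_rhs a b k U x) = 0"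
proof -
  define Z where "Z = bbm_potential U"
  have Z: "Tk Z" "Tk (deriv Z)" "Tk (deriv (deriv Z))"
    unfolding Z_def using U by (simp_all add: Tk_deriv Tk_bbm_potential)
  have "integral {a..b} (\<lambda>x. (U x)\<^sup>2 / 2 * bbm_rhs a b k U x)
      = integral {a..b} (\<lambda>x. bbm_flux U x * bbm_rhs a b k U x)"
    using U Tk_bbm_rhs[OF U] by (rule integral_half_square_mult)
  also have "(\<lambda>x. bbm_flux U x * bbm_rhs a b k U x) = (\<lambda>x. deriv Z x * deriv (deriv Z) x - Z x * deriv Z x)"
    unfolding bbm_flux_eq[OF U] bbm_rhs_eq[OF U] Z_def[symmetric] by (simp add: fun_eq_iff algebra_simps)
  also have "integral {a..b} (\<lambda>x. deriv Z x * deriv (deriv Z) x - Z x * deriv Z x)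
      = integral {a..b} (\<lambda>x. deriv Z x * deriv (deriv Z) x) - integral {a..b} (\<lambda>x. Z x * deriv Z x)"
    using Z by (simp add: integral_diff integrable_Tk_mult)
  also have "\<dots> = 0"
    using Z by (simp add: integral_mult_deriv_Tk_self)
  finally show ?thesis .
qed

end

section \<open>Solutions of the semidiscretization\<close>

context trig_polys begin

lemma continuous_on_trig_sum_family:
  assumes "\<And>j. continuous_on I (\<lambda>t. c t j)" "\<And>j. continuous_on I (\<lambda>t. s t j)"
  shows "continuous_on (I \<times> S) (\<lambda>p. trig_sum (c (fst p)) (s (fst p)) (snd p))"
proof -
  have "continuous_on (I \<times> S) (\<lambda>p. c (fst p) j)" for j
    by (rule continuous_on_compose2[OF assms(1) continuous_on_fst]) auto
  moreover have "continuous_on (I \<times> S) (\<lambda>p. s (fst p) j)" for j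
    by (rule continuous_on_compose2[OF assms(2) continuous_on_fst]) auto
  moreover have "continuous_on (I \<times> S) (\<lambda>p. cosb j (snd p))" for j
    by (rule continuous_on_compose2[OF continuous_on_cosb[of UNIV] continuous_on_snd]) auto
  moreover have "continuous_on (I \<times> S) (\<lambda>p. sinb j (snd p))" for j
    by (rule continuous_on_compose2[OF continuous_on_sinb[of UNIV] continuous_on_snd]) auto
  ultimately show ?thesis
    unfolding trig_sum_def by (intro continuous_intros)
qed

lemma continuous_on_sample_coeffs:
  assumes "\<And>x. continuous_on I (\<lambda>t. f t x)"
  shows "continuous_on I (\<lambda>t. sample.cos_coeff (f t) j)" "continuous_on I (\<lambda>t. sample.sin_coeff (f t) j)"
  unfolding sample.cos_coeff_def sample.sin_coeff_def sample_mean_def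
  by (auto intro!: continuous_intros assms)

lemma has_real_derivative_sample_coeffs:
  assumes "\<And>x. ((\<lambda>s. f s x) has_real_derivative f' x) (at t within I)"
  shows "((\<lambda>s. sample.cos_coeff (f s) j) has_real_derivative sample.cos_coeff f' j) (at t within I)"
    and "((\<lambda>s. sample.sin_coeff (f s) j) has_real_derivative sample.sin_coeff f' j) (at t within I)"
  unfolding sample.cos_coeff_def sample.sin_coeff_def sample_mean_def
  by (intro DERIV_cmult DERIV_cdivide DERIV_sum DERIV_cmult_right assms)+

lemma continuous_on_Tk_family:
  assumes "\<And>t. t \<in> I \<Longrightarrow> Tk (f t)" "\<And>x. continuous_on I (\<lambda>t. f t x)"
  shows "continuous_on (I \<times> S) (\<lambda>p. f (fst p) (snd p))"
    and "continuous_on (I \<times> S) (\<lambda>p. deriv (f (fst p)) (snd p))"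
proof -
  define c where "c t = sample.cos_coeff (f t)" for t
  define s where "s t = sample.sin_coeff (f t)" for t
  have f_eq: "f t = trig_sum (c t) (s t)" if "t \<in> I" for t
    unfolding c_def s_def using assms(1)[OF that] by (rule sample.trig_sum_coeffs)
  have c: "continuous_on I (\<lambda>t. c t j)" and s: "continuous_on I (\<lambda>t. s t j)" for j
    unfolding c_def s_def using assms(2) by (rule continuous_on_sample_coeffs)+
  have "continuous_on (I \<times> S) (\<lambda>p. trig_sum (c (fst p)) (s (fst p)) (snd p))"
    by (intro continuous_on_trig_sum_family c s)
  then show "continuous_on (I \<times> S) (\<lambda>p. f (fst p) (snd p))"
    by (rule continuous_on_eq) (auto simp: f_eq)
  have "continuous_on (I \<times> S)
      (\<lambda>p. trig_sum (\<lambda>j. freq j * s (fst p) j) (\<lambda>j. - freq j * c (fst p) j) (snd p))"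
    by (intro continuous_on_trig_sum_family continuous_intros c s)
  then show "continuous_on (I \<times> S) (\<lambda>p. deriv (f (fst p)) (snd p))"
    by (rule continuous_on_eq) (auto simp: f_eq deriv_trig_sum)
qed

lemma has_real_derivative_deriv_Tk_family:
  assumes "\<And>s. s \<in> I \<Longrightarrow> Tk (f s)" "Tk f'" "t \<in> I"
    and "\<And>x. ((\<lambda>s. f s x) has_real_derivative f' x) (at t within I)"
  shows "((\<lambda>s. deriv (f s) x) has_real_derivative deriv f' x) (at t within I)"
proof (rule has_field_derivative_transform_within[OF _ zero_less_one \<open>t \<in> I\<close>])
  define c where "c s = sample.cos_coeff (f s)" for s
  define d where "d s = sample.sin_coeff (f s)" for s
  show "trig_sum (\<lambda>j. freq j * d s j) (\<lambda>j. - freq j * c s j) x = deriv (f s) x" if "s \<in> I" for s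
    unfolding c_def d_def deriv_trig_sum[symmetric]
    unfolding sample.trig_sum_coeffs[OF assms(1)[OF that], symmetric] ..
  have "deriv f' = trig_sum (\<lambda>j. freq j * sample.sin_coeff f' j) (\<lambda>j. - freq j * sample.cos_coeff f' j)"
    by (subst sample.trig_sum_coeffs[OF assms(2)]) (rule deriv_trig_sum)
  moreover have "((\<lambda>s. trig_sum (\<lambda>j. freq j * d s j) (\<lambda>j. - freq j * c s j) x) has_real_derivative
      trig_sum (\<lambda>j. freq j * sample.sin_coeff f' j) (\<lambda>j. - freq j * sample.cos_coeff f' j) x) (at t within I)"
    unfolding trig_sum_def c_def d_def
    by (intro DERIV_sum DERIV_add DERIV_cmult_right DERIV_cmult has_real_derivative_sample_coeffs assms(4))
  ultimately show "((\<lambda>s. trig_sum (\<lambda>j. freq j * d s j) (\<lambda>j. - freq j * c s j) x) has_real_derivative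
      deriv f' x) (at t within I)"
    by simp
qed

end

locale trig_curve = trig_polys +
  fixes I :: "real set" and u v :: "real \<Rightarrow> real \<Rightarrow> real"
  assumes convex_I: "convex I"
    and Tk_u: "t \<in> I \<Longrightarrow> Tk (u t)"
    and Tk_v: "t \<in> I \<Longrightarrow> Tk (v t)"
    and u_has_derivative: "t \<in> I \<Longrightarrow> ((\<lambda>s. u s x) has_real_derivative v t x) (at t within I)"
    and continuous_on_v: "continuous_on I (\<lambda>t. v t x)"
begin

lemma continuous_on_u: "continuous_on I (\<lambda>t. u t x)"
  using u_has_derivative by (auto intro: DERIV_continuous simp: continuous_on_eq_continuous_within)

lemma deriv_u_has_derivative:
  "t \<in> I \<Longrightarrow> ((\<lambda>s. deriv (u s) x) has_real_derivative deriv (v t) x) (at t within I)"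
  by (intro has_real_derivative_deriv_Tk_family Tk_u Tk_v u_has_derivative)

lemmas continuous_on_u_joint = continuous_on_Tk_family[OF Tk_u continuous_on_u]
lemmas continuous_on_v_joint = continuous_on_Tk_family[OF Tk_v continuous_on_v]

lemma mass_has_derivative:
  "t \<in> I \<Longrightarrow> ((\<lambda>t. bbm_mass a b (u t)) has_real_derivative integral {a..b} (v t)) (at t within I)"
  unfolding bbm_mass_def
  by (rule has_real_derivative_integral_param[OF convex_I])
    (auto intro: u_has_derivative continuous_on_Tk Tk_u continuous_on_v_joint)

lemma momentum_has_derivative:
  "t \<in> I \<Longrightarrow> ((\<lambda>t. bbm_momentum a b (u t)) has_real_derivative
     integral {a..b} (\<lambda>x. u t x * v t x + deriv (u t) x * deriv (v t) x)) (at t within I)"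
  unfolding bbm_momentum_def
proof (rule has_real_derivative_integral_param[OF convex_I])
  show "((\<lambda>s. (u s x)\<^sup>2 / 2 + (deriv (u s) x)\<^sup>2 / 2) has_real_derivative
      u t x * v t x + deriv (u t) x * deriv (v t) x) (at t within I)" if "t \<in> I" for t x
    using u_has_derivative[OF that, of x] deriv_u_has_derivative[OF that, of x]
    by (auto intro!: derivative_eq_intros)
  show "continuous_on {a..b} (\<lambda>x. (u t x)\<^sup>2 / 2 + (deriv (u t) x)\<^sup>2 / 2)" if "t \<in> I" for t
    using Tk_u[OF that] by (intro continuous_intros continuous_on_Tk Tk_deriv) auto
  show "continuous_on (I \<times> {a..b}) (\<lambda>p. u (fst p) (snd p) * v (fst p) (snd p)
      + deriv (u (fst p)) (snd p) * deriv (v (fst p)) (snd p))"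
    by (intro continuous_intros continuous_on_u_joint continuous_on_v_joint)
qed

lemma energy_has_derivative:
  "t \<in> I \<Longrightarrow> ((\<lambda>t. bbm_energy a b (u t)) has_real_derivative
     integral {a..b} (\<lambda>x. (u t x)\<^sup>2 / 2 * v t x)) (at t within I)"
  unfolding bbm_energy_def
proof (rule has_real_derivative_integral_param[OF convex_I])
  show "((\<lambda>s. (u s x) ^ 3 / 6) has_real_derivative (u t x)\<^sup>2 / 2 * v t x) (at t within I)"
    if "t \<in> I" for t x
    using u_has_derivative[OF that, of x] by (auto intro!: derivative_eq_intros simp: power2_eq_square)
  show "continuous_on {a..b} (\<lambda>x. (u t x) ^ 3 / 6)" if "t \<in> I" for t
    using Tk_u[OF that] by (intro continuous_intros continuous_on_Tk) auto
  show "continuous_on (I \<times> {a..b}) (\<lambda>p. (u (fst p) (snd p))\<^sup>2 / 2 * v (fst p) (snd p))"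
    by (intro continuous_intros continuous_on_u_joint continuous_on_v_joint) auto
qed

end

theorem theorem2p1:
  fixes a b :: real and k :: nat and I :: "real set" and u :: "real \<Rightarrow> real \<Rightarrow> real"
  assumes ab: "a < b"
    and I_open: "open I" and I_interval: "is_interval I" and I_ne: "I \<noteq> {}"
    and u_Tk: "\<And>t. t \<in> I \<Longrightarrow> trig_poly a b k (u t)"
    and u_ode: "\<And>t x. t \<in> I \<Longrightarrow>
                  ((\<lambda>s. u s x) has_real_derivative bbm_rhs a b k (u t) x) (at t)"
    and u_C1: "\<And>x. continuous_on I (\<lambda>t. bbm_rhs a b k (u t) x)"
  shows "\<forall>t1\<in>I. \<forall>t2\<in>I.
           bbm_mass a b (u t1) = bbm_mass a b (u t2) \<and>
           bbm_momentum a b (u t1) = bbm_momentum a b (u t2) \<and>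
           bbm_energy a b (u t1) = bbm_energy a b (u t2)"
proof -
  interpret trig_polys a b k
    using ab by unfold_locales
  interpret trig_curve a b k I u "\<lambda>t. bbm_rhs a b k (u t)"
    using is_interval_convex[OF I_interval] u_Tk Tk_bbm_rhs u_ode u_C1
    by unfold_locales (auto intro: has_field_derivative_at_within)
  have "\<exists>c. \<forall>t\<in>I. bbm_mass a b (u t) = c"
    using mass_has_derivative integral_bbm_rhs u_Tk
    by (intro has_field_derivative_zero_constant[OF convex_I]) simp
  moreover have "\<exists>c. \<forall>t\<in>I. bbm_momentum a b (u t) = c"
    using momentum_has_derivative integral_bbm_rhs_momentum u_Tk
    by (intro has_field_derivative_zero_constant[OF convex_I]) simp
  moreover have "\<exists>c. \<forall>t\<in>I. bbm_energy a b (u t) = c"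
    using energy_has_derivative integral_bbm_rhs_energy u_Tk
    by (intro has_field_derivative_zero_constant[OF convex_I]) simp
  ultimately show ?thesis
    by metis
qed

end
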